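(* Let $n\ge 1$, $N=2^n$ and $s=(N-1)/2$. Let $0\le j<N/2$ be an integer and let $z\in\{0,1\}^N$ have Hamming distance strictly less than $N/16$ from the Hadamard codeword $W^{(N)}_j$. Let $$|\Psi_3\rangle=\hat H^{\otimes n}\,\hat U_z\,\hat H^{\otimes n}\,\tfrac{1}{\sqrt2}\left(\left|\tfrac12\right\rangle_s+\left|-\tfrac12\right\rangle_s\right).$$ Then measuring $|\Psi_3\rangle$ in the spin basis yields one of the two states $|\tfrac12+j\rangle_s$, $|-\tfrac12-j\rangle_s$ with probability at least $9/16$, i.e. $$\left|\left\langle \tfrac12+j\,\middle|\,\Psi_3\right\rangle_s\right|^2+\left|\left\langle -\tfrac12-j\,\middle|\,\Psi_3\right\rangle_s\right|^2\ \ge\ \tfrac{9}{16}.$$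
   Context: Work in $\mathbb{C}^N$ with computational basis $\{|y\rangle : y=0,\dots,N-1\}$. The spin basis states $|m\rangle_s$, $m\in\{-s,\dots,s\}$, are identified with computational basis states via $|m\rangle_s=|m+s\rangle$. For $x,y\in\{0,\dots,N-1\}$ let $x\cdot y\in\{0,1\}$ be the inner product modulo 2 of their $n$-bit binary expansions. $\hat H^{\otimes n}|y\rangle=N^{-1/2}\sum_{x=0}^{N-1}(-1)^{x\cdot y}|x\rangle$. The Hadamard codeword $W^{(N)}_j\in\{0,1\}^N$ has bit $x\cdot j$ at position $x\in\{0,\dots,N-1\}$. For $z\in\{0,1\}^N$, $\hat U_z$ is the diagonal unitary $\hat U_z|x\rangle=(-1)^{z_x}|x\rangle$. Strings at Hamming distance less than $N/16$ from $W^{(N)}_j$ are called codewords with fewer than $N/16$ unrestricted errors (the set $\Xi^{(N)}_j$). *)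

theory Defs
  imports Complex_Main
begin

text \<open>Vectors in C^N (N = 2^n) are functions nat => complex; only indices y < N matter.\<close>

definition bdot :: "nat \<Rightarrow> nat \<Rightarrow> nat \<Rightarrow> nat" where
  "bdot n x y = (\<Sum>i<n. of_bool (bit x i \<and> bit y i)) mod 2"

definition hadamard_codeword :: "nat \<Rightarrow> nat \<Rightarrow> nat \<Rightarrow> bool" where
  "hadamard_codeword n j x = (bdot n x j = 1)"

definition hamming_dist :: "nat \<Rightarrow> (nat \<Rightarrow> bool) \<Rightarrow> (nat \<Rightarrow> bool) \<Rightarrow> nat" where
  "hamming_dist N u v = card {x. x < N \<and> u x \<noteq> v x}"

definition hadamard_n :: "nat \<Rightarrow> (nat \<Rightarrow> complex) \<Rightarrow> (nat \<Rightarrow> complex)" where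
  "hadamard_n n v = (\<lambda>x. complex_of_real (1 / sqrt (2 ^ n)) * (\<Sum>y<2^n. (-1::complex) ^ bdot n x y * v y))"

definition U_op :: "(nat \<Rightarrow> bool) \<Rightarrow> (nat \<Rightarrow> complex) \<Rightarrow> (nat \<Rightarrow> complex)" where
  "U_op z v = (\<lambda>x. (if z x then -1 else 1::complex) * v x)"

text \<open>Spin basis state |m>_s with s = (N-1)/2, identified with |m+s>.\<close>
definition spin_ket :: "nat \<Rightarrow> real \<Rightarrow> (nat \<Rightarrow> complex)" where
  "spin_ket n m = (\<lambda>y. if real y = m + (2 ^ n - 1) / 2 then 1 else 0)"

definition braket :: "nat \<Rightarrow> (nat \<Rightarrow> complex) \<Rightarrow> (nat \<Rightarrow> complex) \<Rightarrow> complex" where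
  "braket N u v = (\<Sum>y<N. cnj (u y) * v y)"

end

theory Submission
  imports Defs
begin

text \<open>Write \<open>w\<^sub>y(x) = (-1)\<^bsup>x\<cdot>y\<^esup>\<close> for the Walsh characters, \<open>a = N/2\<close> and \<open>b = N/2 - 1\<close>,
  so that the input state is \<open>(|a\<rangle> + |b\<rangle>)/\<surd>2\<close> and the two target states are
  \<open>|a \<oplus> j\<rangle>\<close> and \<open>|b \<oplus> j\<rangle>\<close>. After \<open>H U\<^sub>z H\<close>, the amplitude of \<open>|p \<oplus> j\<rangle>\<close> (\<open>p \<in> {a, b}\<close>)
  is \<open>(N\<surd>2)\<^sup>-\<^sup>1 \<Sum>\<^sub>x \<plusminus>(1 + w\<^sub>a(x) w\<^sub>b(x))\<close>, since \<open>z\<close> agrees with \<open>w\<^sub>j\<close> except at the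
  error positions, where the sign is flipped. The summands lie in \<open>{0, 2}\<close> and, by orthogonality
  of \<open>w\<^sub>a\<close> and \<open>w\<^sub>b\<close>, add up to \<open>N\<close> without errors; each error costs at most 4. With fewer
  than \<open>N/16\<close> errors the amplitude is at least \<open>3/(4\<surd>2)\<close>, so each of the two outcomes has
  probability at least \<open>9/32\<close>.\<close>

definition sign_of :: "bool \<Rightarrow> int" where
  "sign_of b = (if b then -1 else 1)"

definition walsh :: "nat \<Rightarrow> nat \<Rightarrow> nat \<Rightarrow> int" where
  "walsh n x y = (-1) ^ bdot n x y"

definition ket :: "nat \<Rightarrow> nat \<Rightarrow> complex" where
  "ket p = (\<lambda>y. if y = p then 1 else 0)"

lemma walsh_eq_prod: "walsh n x y = (\<Prod>i<n. sign_of (bit x i \<and> bit y i))"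
proof -
  have "walsh n x y = (-1) ^ (\<Sum>i<n. of_bool (bit x i \<and> bit y i) :: nat)"
    unfolding walsh_def bdot_def by (simp add: minus_one_power_iff)
  also have "\<dots> = (\<Prod>i<n. (-1) ^ of_bool (bit x i \<and> bit y i))"
    by (simp only: power_sum)
  also have "\<dots> = (\<Prod>i<n. sign_of (bit x i \<and> bit y i))"
    by (rule prod.cong) (auto simp: sign_of_def)
  finally show ?thesis .
qed

lemma walsh_commute: "walsh n x y = walsh n y x"
  unfolding walsh_eq_prod by (simp add: conj_commute)

lemma walsh_cases: "walsh n x y = 1 \<or> walsh n x y = -1"
  by (simp add: walsh_def minus_one_power_iff)

lemma walsh_mult_self [simp]: "walsh n x y * walsh n x y = 1"
  unfolding walsh_def by (simp flip: power_mult_distrib)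

lemma walsh_xor_right: "walsh n x (xor p q) = walsh n x p * walsh n x q"
  unfolding walsh_eq_prod prod.distrib [symmetric]
  by (rule prod.cong) (auto simp: bit_xor_iff sign_of_def)

lemma walsh_eq_sign_of_codeword: "walsh n x j = sign_of (hadamard_codeword n j x)"
proof -
  have "bdot n x j < 2" by (simp add: bdot_def)
  then show ?thesis
    by (auto simp: walsh_def sign_of_def hadamard_codeword_def less_2_cases_iff)
qed

lemma sum_lessThan_double:
  fixes f :: "nat \<Rightarrow> 'a::comm_monoid_add"
  shows "(\<Sum>x<2 * M. f x) = (\<Sum>x<M. f (2 * x) + f (2 * x + 1))"
  by (induction M) (simp_all add: add.assoc)

lemma sum_prod_bits:
  fixes g :: "nat \<Rightarrow> bool \<Rightarrow> 'a::comm_semiring_1"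
  shows "(\<Sum>x::nat<2 ^ n. \<Prod>i<n. g i (bit x i)) = (\<Prod>i<n. g i False + g i True)"
proof (induction n arbitrary: g)
  case 0
  then show ?case by simp
next
  case (Suc n)
  define P where "P x = (\<Prod>i<n. g (Suc i) (bit x i))" for x :: nat
  have split_low_bit: "(\<Prod>i<Suc n. g i (bit x i)) = g 0 (odd x) * P (x div 2)" for x :: nat
    unfolding P_def prod.lessThan_Suc_shift by (simp add: bit_Suc bit_0)
  have "(\<Sum>x::nat<2 ^ Suc n. \<Prod>i<Suc n. g i (bit x i)) = (\<Sum>x<2 * 2 ^ n. g 0 (odd x) * P (x div 2))"
    by (simp only: split_low_bit power_Suc)
  also have "\<dots> = (g 0 False + g 0 True) * (\<Sum>x<2 ^ n. P x)"
    by (simp add: sum_lessThan_double sum_distrib_left algebra_simps)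
  also have "\<dots> = (\<Prod>i<Suc n. g i False + g i True)"
    using Suc.IH [of "\<lambda>i. g (Suc i)"] by (simp only: P_def prod.lessThan_Suc_shift)
  finally show ?case .
qed

lemma bit_imp_less_of_less_exp:
  fixes x :: nat
  assumes "x < 2 ^ m" and "bit x i"
  shows "i < m"
  using assms by (metis bit_take_bit_iff take_bit_nat_eq_self_iff)

lemma sum_walsh:
  assumes "r < 2 ^ n"
  shows "(\<Sum>x<2 ^ n. walsh n x r) = (if r = 0 then 2 ^ n else 0)"
proof -
  have "(\<Sum>x<2 ^ n. walsh n x r) = (\<Prod>i<n. sign_of False + sign_of (bit r i))"
    unfolding walsh_eq_prod using sum_prod_bits [of "\<lambda>i t. sign_of (t \<and> bit r i)" n] by simp
  also have "\<dots> = (if r = 0 then 2 ^ n else 0)"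
  proof (cases "r = 0")
    case False
    then obtain i where "bit r i" using bit_eqI [of r 0] by auto
    moreover have "i < n" using bit_imp_less_of_less_exp [OF assms] calculation .
    ultimately show ?thesis using False by (auto simp: sign_of_def intro!: prod_zero bexI [of _ i])
  qed (simp add: sign_of_def)
  finally show ?thesis .
qed

lemma walsh_orthogonal:
  assumes "p < 2 ^ n" and "q < 2 ^ n" and "p \<noteq> q"
  shows "(\<Sum>x<2 ^ n. walsh n x p * walsh n x q) = 0"
proof -
  have "xor p q < 2 ^ n"
    using assms by (metis take_bit_nat_eq_self_iff take_bit_xor)
  moreover have "xor p q \<noteq> 0"
  proof
    assume "xor p q = 0"
    then have "bit p i = bit q i" for i
      using bit_xor_iff [of p q i] by simp
    then show False using assms(3) bit_eqI by blast
  qed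
  ultimately show ?thesis by (simp add: sum_walsh flip: walsh_xor_right)
qed

lemma exp_add_eq_xor:
  fixes j :: nat
  assumes "j < 2 ^ m"
  shows "2 ^ m + j = xor (2 ^ m) j"
proof (rule disjunctive_add_eq_xor)
  show "and (2 ^ m) j = 0"
    using bit_imp_less_of_less_exp [OF assms]
    by (intro bit_eqI) (auto simp: bit_and_iff bit_exp_iff)
qed

lemma mask_minus_eq_xor:
  fixes j :: nat
  assumes "j < 2 ^ m"
  shows "mask m - j = xor (mask m) j"
proof -
  have "and (xor (mask m) j) j = 0"
    using bit_imp_less_of_less_exp [OF assms]
    by (intro bit_eqI) (auto simp: bit_and_iff bit_xor_iff bit_mask_iff)
  then have "xor (mask m) j + j = or (xor (mask m) j) j"
    by (rule disjunctive_add_eq_or)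
  also have "\<dots> = mask m"
    using bit_imp_less_of_less_exp [OF assms]
    by (intro bit_eqI) (auto simp: bit_or_iff bit_xor_iff bit_mask_iff)
  finally show ?thesis by simp
qed

lemma spin_ket_eq_ket:
  assumes "real p = r + (2 ^ n - 1) / 2"
  shows "spin_ket n r = ket p"
  unfolding spin_ket_def ket_def using assms by (auto simp flip: assms)

lemma spin_ket_up: "spin_ket (Suc m) (1/2 + real j) = ket (2 ^ m + j)"
  by (rule spin_ket_eq_ket) (simp add: field_simps)

lemma spin_ket_down:
  assumes "j < 2 ^ m"
  shows "spin_ket (Suc m) (-1/2 - real j) = ket (mask m - j)"
  by (rule spin_ket_eq_ket) (use assms in \<open>simp add: field_simps mask_eq_exp_minus_1\<close>)

lemma braket_ket:
  assumes "p < N"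
  shows "braket N (ket p) v = v p"
proof -
  have "braket N (ket p) v = (\<Sum>y<N. if y = p then v y else 0)"
    unfolding braket_def ket_def by (rule sum.cong) auto
  then show ?thesis using assms by simp
qed

lemma hadamard_n_eq_walsh_sum:
  "hadamard_n n v x = of_real (1 / sqrt (2 ^ n)) * (\<Sum>y<2 ^ n. of_int (walsh n x y) * v y)"
  by (simp add: hadamard_n_def walsh_def)

lemma hadamard_n_ket_pair:
  assumes "a < 2 ^ n" and "b < 2 ^ n"
  shows "hadamard_n n (\<lambda>y. c * (ket a y + ket b y)) x
       = of_real (1 / sqrt (2 ^ n)) * c * of_int (walsh n x a + walsh n x b)"
proof -
  have "(\<Sum>y<2 ^ n. of_int (walsh n x y) * (c * (ket a y + ket b y)))
      = (\<Sum>y<2 ^ n. (if y = a then c * of_int (walsh n x a) else 0)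
                   + (if y = b then c * of_int (walsh n x b) else 0))"
    unfolding ket_def by (rule sum.cong) auto
  also have "\<dots> = c * of_int (walsh n x a + walsh n x b)"
    using assms by (simp add: sum.distrib algebra_simps)
  finally show ?thesis by (simp add: hadamard_n_eq_walsh_sum)
qed

lemma U_op_eq_sign_of: "U_op z v x = of_int (sign_of (z x)) * v x"
  by (simp add: U_op_def sign_of_def)

lemma hadamard_phase_hadamard_ket_pair:
  assumes "a < 2 ^ n" and "b < 2 ^ n"
  shows "hadamard_n n (U_op z (hadamard_n n (\<lambda>y. c * (ket a y + ket b y)))) y
       = of_real (1 / 2 ^ n) * c
         * of_int (\<Sum>x<2 ^ n. walsh n y x * sign_of (z x) * (walsh n x a + walsh n x b))"
proof -
  define \<kappa> :: complex where "\<kappa> = of_real (1 / sqrt (2 ^ n))"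
  have "hadamard_n n (U_op z (hadamard_n n (\<lambda>y. c * (ket a y + ket b y)))) y
      = \<kappa> * (\<Sum>x<2 ^ n. of_int (walsh n y x)
                     * (of_int (sign_of (z x)) * (\<kappa> * c * of_int (walsh n x a + walsh n x b))))"
    unfolding hadamard_n_eq_walsh_sum [of n _ y] U_op_eq_sign_of hadamard_n_ket_pair [OF assms] \<kappa>_def ..
  also have "\<dots> = \<kappa> * \<kappa> * c
      * of_int (\<Sum>x<2 ^ n. walsh n y x * sign_of (z x) * (walsh n x a + walsh n x b))"
    by (simp add: sum_distrib_left algebra_simps)
  also have "\<kappa> * \<kappa> = of_real (1 / 2 ^ n)"
    by (simp add: \<kappa>_def flip: of_real_mult)
  finally show ?thesis .
qed

lemma interference_sum_lower_bound:
  assumes "a < 2 ^ n" and "b < 2 ^ n" and "a \<noteq> b" and "p = a \<or> p = b"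
  shows "int (2 ^ n) - 4 * int (hamming_dist (2 ^ n) z (hadamard_codeword n j))
       \<le> (\<Sum>x<2 ^ n. walsh n (xor p j) x * sign_of (z x) * (walsh n x a + walsh n x b))"
proof -
  define E where "E = {x. x < 2 ^ n \<and> z x \<noteq> hadamard_codeword n j x}"
  define t where "t x = 1 + walsh n x a * walsh n x b" for x
  have sum_t: "(\<Sum>x<2 ^ n. t x) = 2 ^ n"
    using walsh_orthogonal [OF assms(1-3)] by (simp add: t_def sum.distrib)
  have t_le_2: "t x \<le> 2" for x
    using walsh_cases [of n x a] walsh_cases [of n x b] by (auto simp: t_def)
  have summand: "walsh n (xor p j) x * sign_of (z x) * (walsh n x a + walsh n x b)
               = (if x \<in> E then - t x else t x)" if "x < 2 ^ n" for x
  proof -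
    have sign_z: "sign_of (z x) = walsh n x j * sign_of (x \<in> E)"
      using that by (auto simp: E_def walsh_eq_sign_of_codeword sign_of_def)
    have "walsh n (xor p j) x * sign_of (z x)
        = (walsh n x j * walsh n x j) * (sign_of (x \<in> E) * walsh n x p)"
      unfolding walsh_commute [of n "xor p j"] walsh_xor_right sign_z by (simp only: ac_simps)
    moreover have "walsh n x p * (walsh n x a + walsh n x b) = t x"
      using assms(4) by (auto simp: t_def algebra_simps)
    ultimately show ?thesis
      by (simp add: sign_of_def mult.assoc)
  qed
  have "(\<Sum>x<2 ^ n. walsh n (xor p j) x * sign_of (z x) * (walsh n x a + walsh n x b))
      = (\<Sum>x<2 ^ n. t x - 2 * (if x \<in> E then t x else 0))"
    by (rule sum.cong) (simp_all add: summand)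
  also have "\<dots> = (\<Sum>x<2 ^ n. t x) - 2 * (\<Sum>x\<in>E. t x)"
  proof -
    have "(\<Sum>x<2 ^ n. if x \<in> E then t x else 0) = (\<Sum>x\<in>E. t x)"
      by (subst sum.If_cases) (auto simp: E_def intro!: sum.cong)
    then show ?thesis by (simp add: sum_subtractf flip: sum_distrib_left)
  qed
  moreover have "(\<Sum>x\<in>E. t x) \<le> 2 * int (card E)"
    using sum_bounded_above [of E t 2] t_le_2 by (simp add: mult.commute)
  ultimately show ?thesis
    using sum_t by (simp add: hamming_dist_def E_def)
qed

lemma amplitude_sq_lower_bound:
  fixes N d :: nat and s :: int
  assumes "int N - 4 * int d \<le> s" and "real d < real N / 16"
  shows "9 / 32 \<le> (cmod (of_real (1 / real N) * of_real (1 / sqrt 2) * of_int s))\<^sup>2"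
proof -
  have "real N > 0" using assms(2) by linarith
  have "3 * real N / 4 \<le> real_of_int s" using assms by linarith
  then have "(3 * real N / 4)\<^sup>2 \<le> (real_of_int s)\<^sup>2"
    using \<open>real N > 0\<close> by (intro power_mono) auto
  then have "9 / 32 \<le> (real_of_int s)\<^sup>2 / (2 * (real N)\<^sup>2)"
    using \<open>real N > 0\<close> by (simp add: field_simps power2_eq_square)
  also have "\<dots> = (real_of_int s / (real N * sqrt 2))\<^sup>2"
    by (simp add: power_divide power_mult_distrib)
  also have "\<dots> = (cmod (of_real (1 / real N) * of_real (1 / sqrt 2) * of_int s))\<^sup>2"
  proof -
    have "of_real (1 / real N) * of_real (1 / sqrt 2) * of_int s
        = complex_of_real (real_of_int s / (real N * sqrt 2))"
      by simp
    then show ?thesis by (simp only: norm_of_real power2_abs)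
  qed
  finally show ?thesis .
qed

lemma decoded_amplitude_sq_lower_bound:
  assumes "a < 2 ^ n" and "b < 2 ^ n" and "a \<noteq> b" and "p = a \<or> p = b"
    and "real (hamming_dist (2 ^ n) z (hadamard_codeword n j)) < real (2 ^ n) / 16"
  shows "9 / 32 \<le> (cmod (hadamard_n n (U_op z (hadamard_n n
           (\<lambda>y. of_real (1 / sqrt 2) * (ket a y + ket b y)))) (xor p j)))\<^sup>2"
  using amplitude_sq_lower_bound [OF interference_sum_lower_bound [OF assms(1-4)] assms(5)]
  unfolding hadamard_phase_hadamard_ket_pair [OF assms(1,2)] by (simp only: of_nat_power of_nat_numeral)

theorem lemma3:
  fixes n j :: nat and z :: "nat \<Rightarrow> bool"
  assumes "n \<ge> 1"
    and "j < 2 ^ n div 2"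
    and "real (hamming_dist (2 ^ n) z (hadamard_codeword n j)) < real (2 ^ n) / 16"
  defines "Psi3 \<equiv> hadamard_n n (U_op z (hadamard_n n
              (\<lambda>y. (1 / sqrt 2) * (spin_ket n (1/2) y + spin_ket n (-1/2) y))))"
  shows "(cmod (braket (2 ^ n) (spin_ket n (1/2 + real j)) Psi3))\<^sup>2
       + (cmod (braket (2 ^ n) (spin_ket n (-1/2 - real j)) Psi3))\<^sup>2 \<ge> 9 / 16"
proof -
  obtain m where n: "n = Suc m" using assms(1) by (cases n) auto
  have j: "j < 2 ^ m" using assms(2) n by simp
  have "(0::nat) < 2 ^ m" and "(2::nat) ^ n = 2 * 2 ^ m"
    using n by simp_all
  then have ab: "2 ^ m < (2::nat) ^ n" "mask m < (2::nat) ^ n" "(2::nat) ^ m \<noteq> mask m"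
    and up: "2 ^ m + j < (2::nat) ^ n" and down: "mask m - j < (2::nat) ^ n"
    using j by (simp_all add: mask_eq_exp_minus_1)
  have "spin_ket n (1/2) = ket (2 ^ m)" and "spin_ket n (-1/2) = ket (mask m)"
    using spin_ket_up [of m 0] spin_ket_down [of 0 m] n by (simp_all add: mask_eq_exp_minus_1)
  then have Psi3: "Psi3 = hadamard_n n (U_op z (hadamard_n n
      (\<lambda>y. of_real (1 / sqrt 2) * (ket (2 ^ m) y + ket (mask m) y))))"
    by (simp add: Psi3_def)
  have "braket (2 ^ n) (spin_ket n (1/2 + real j)) Psi3 = Psi3 (xor (2 ^ m) j)"
    using braket_ket [OF up] spin_ket_up [of m j] n by (simp add: exp_add_eq_xor [OF j])
  moreover have "braket (2 ^ n) (spin_ket n (-1/2 - real j)) Psi3 = Psi3 (xor (mask m) j)"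
    using braket_ket [OF down] spin_ket_down [OF j] n by (simp add: mask_minus_eq_xor [OF j])
  ultimately show ?thesis
    using decoded_amplitude_sq_lower_bound [OF ab, of "2 ^ m" z j]
      decoded_amplitude_sq_lower_bound [OF ab, of "mask m" z j] assms(3)
    unfolding Psi3 by simp
qed

end
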